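(* Let $\mathcal{T}$ be a single-elimination tournament with at least two players, let $R$ be a uniformly random bracket of $\mathcal{T}$, and define $q_{\mathrm{pair}}=\min_{a,b\in P(\mathcal{T}),\,a\ne b}\Pr[R(x_{a,b})\in\{a,b\}]$. If $\mathcal{T}$ has $N$ total brackets, then for every scoring system $\sigma$, $\mathrm{res}(\mathcal{T},\sigma)>(1-q_{\mathrm{pair}})N$.
   Context: A single-elimination tournament is a finite directed graph $\mathcal{T}$ such that: (a) $\mathcal{T}$ has exactly one sink (vertex with no out-neighbours); (b) every non-sink vertex has exactly one out-neighbour; (c) $\mathcal{T}$ has no directed cycles; (d) $|N^-(v)|\ne 1$ for every vertex $v$, where $N^-(v)$ denotes the set of in-neighbours of $v$. The players $P(\mathcal{T})$ are the sources and the matches are $M(\mathcal{T})=V(\mathcal{T})\setminus P(\mathcal{T})$. For a vertex $u$, $P(u)$ is the set of players $a$ for which there is a directed walk from $a$ to $u$ (length $0$ allowed). For distinct players $a,b$, $x_{a,b}$ denotes the unique match $x$ having in-neighbours $u_a,u_b\in N^-(x)$ with $P(u_a)\cap\{a,b\}=\{a\}$ and $P(u_b)\cap\{a,b\}=\{b\}$ (such a match exists and is unique). A bracket is a function $B:V(\mathcal{T})\to P(\mathcal{T})$ with $B(a)=a$ for every player $a$ and $B(x)\in\{B(u):u\in N^-(x)\}$ for every match $x$. A scoring system is any function $\sigma:M(\mathcal{T})\to\mathbb{R}_{>0}$. For brackets $B,B'$ let $\mathrm{score}_\sigma(B,B')=\sum_{x\in M(\mathcal{T}):\,B(x)=B'(x)}\sigma(x)$.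 A set of brackets $\mathcal{B}$ is $\sigma$-resolving if for every pair of distinct brackets $B\ne B'$ there is $B_i\in\mathcal{B}$ with $\mathrm{score}_\sigma(B_i,B)\ne\mathrm{score}_\sigma(B_i,B')$. $\mathrm{res}(\mathcal{T},\sigma)$ is the minimum $r$ such that every set of $r$ brackets is $\sigma$-resolving. *)

theory Defs
  imports Complex_Main "HOL-Library.FuncSet"
begin

definition out_nbrs :: "('v \<times> 'v) set \<Rightarrow> 'v \<Rightarrow> 'v set" where
  "out_nbrs E v = {w. (v, w) \<in> E}"

definition in_nbrs :: "('v \<times> 'v) set \<Rightarrow> 'v \<Rightarrow> 'v set" where
  "in_nbrs E v = {u. (u, v) \<in> E}"

definition sinks :: "'v set \<Rightarrow> ('v \<times> 'v) set \<Rightarrow> 'v set" where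
  "sinks V E = {v \<in> V. out_nbrs E v = {}}"

definition single_elim_tournament :: "'v set \<Rightarrow> ('v \<times> 'v) set \<Rightarrow> bool" where
  "single_elim_tournament V E \<longleftrightarrow>
     finite V \<and> E \<subseteq> V \<times> V \<and>
     card (sinks V E) = 1 \<and>
     (\<forall>v \<in> V - sinks V E. card (out_nbrs E v) = 1) \<and>
     (\<forall>v. (v, v) \<notin> E\<^sup>+) \<and>
     (\<forall>v \<in> V. card (in_nbrs E v) \<noteq> 1)"

definition players :: "'v set \<Rightarrow> ('v \<times> 'v) set \<Rightarrow> 'v set" where
  "players V E = {v \<in> V. in_nbrs E v = {}}"

definition matches :: "'v set \<Rightarrow> ('v \<times> 'v) set \<Rightarrow> 'v set" where
  "matches V E = V - players V E"

definition players_of :: "'v set \<Rightarrow> ('v \<times> 'v) set \<Rightarrow> 'v \<Rightarrow> 'v set" where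
  "players_of V E u = {a \<in> players V E. (a, u) \<in> E\<^sup>*}"

definition meet_match :: "'v set \<Rightarrow> ('v \<times> 'v) set \<Rightarrow> 'v \<Rightarrow> 'v \<Rightarrow> 'v" where
  "meet_match V E a b = (THE x. x \<in> matches V E \<and>
      (\<exists>ua ub. ua \<in> in_nbrs E x \<and> ub \<in> in_nbrs E x \<and>
         players_of V E ua \<inter> {a, b} = {a} \<and> players_of V E ub \<inter> {a, b} = {b}))"

text \<open>Brackets, as functions V \<rightarrow> players that are \<open>undefined\<close> outside V
  (so that distinct brackets are distinct functions on V).\<close>
definition is_bracket :: "'v set \<Rightarrow> ('v \<times> 'v) set \<Rightarrow> ('v \<Rightarrow> 'v) \<Rightarrow> bool" where
  "is_bracket V E B \<longleftrightarrow> B \<in> extensional V \<and>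
     (\<forall>v \<in> V. B v \<in> players V E) \<and>
     (\<forall>a \<in> players V E. B a = a) \<and>
     (\<forall>x \<in> matches V E. B x \<in> B ` in_nbrs E x)"

definition brackets :: "'v set \<Rightarrow> ('v \<times> 'v) set \<Rightarrow> ('v \<Rightarrow> 'v) set" where
  "brackets V E = {B. is_bracket V E B}"

definition scoring_system :: "'v set \<Rightarrow> ('v \<times> 'v) set \<Rightarrow> ('v \<Rightarrow> real) \<Rightarrow> bool" where
  "scoring_system V E \<sigma> \<longleftrightarrow> (\<forall>x \<in> matches V E. \<sigma> x > 0)"

definition score :: "'v set \<Rightarrow> ('v \<times> 'v) set \<Rightarrow> ('v \<Rightarrow> real) \<Rightarrow> ('v \<Rightarrow> 'v) \<Rightarrow> ('v \<Rightarrow> 'v) \<Rightarrow> real" where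
  "score V E \<sigma> B B' = (\<Sum>x \<in> {x \<in> matches V E. B x = B' x}. \<sigma> x)"

definition resolving :: "'v set \<Rightarrow> ('v \<times> 'v) set \<Rightarrow> ('v \<Rightarrow> real) \<Rightarrow> ('v \<Rightarrow> 'v) set \<Rightarrow> bool" where
  "resolving V E \<sigma> S \<longleftrightarrow>
     (\<forall>B \<in> brackets V E. \<forall>B' \<in> brackets V E. B \<noteq> B' \<longrightarrow>
        (\<exists>Bi \<in> S. score V E \<sigma> Bi B \<noteq> score V E \<sigma> Bi B'))"

definition res :: "'v set \<Rightarrow> ('v \<times> 'v) set \<Rightarrow> ('v \<Rightarrow> real) \<Rightarrow> nat" where
  "res V E \<sigma> = (LEAST r. \<forall>S. S \<subseteq> brackets V E \<and> card S = r \<longrightarrow> resolving V E \<sigma> S)"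

definition pair_prob :: "'v set \<Rightarrow> ('v \<times> 'v) set \<Rightarrow> 'v \<Rightarrow> 'v \<Rightarrow> real" where
  "pair_prob V E a b =
     real (card {B \<in> brackets V E. B (meet_match V E a b) \<in> {a, b}}) / real (card (brackets V E))"

definition q_pair :: "'v set \<Rightarrow> ('v \<times> 'v) set \<Rightarrow> real" where
  "q_pair V E = Min {pair_prob V E a b | a b. a \<in> players V E \<and> b \<in> players V E \<and> a \<noteq> b}"

end

theory Submission
  imports Defs
begin

(* Choose players a, b attaining q_pair and let x = x_{a,b}. Letting the better-ranked player
   win every match, with a suitable ranking, gives a bracket B in which a wins x and loses its
   next match; then B' = B(x := b) is a bracket as well. Since B and B' differ only at x, every
   bracket C with C(x) \<notin> {a,b} scores them equally. So the (1 - q_pair) N brackets of this kind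
   form a non-resolving set, and res exceeds their number. *)

locale se_tournament =
  fixes V :: "'v set" and E :: "('v \<times> 'v) set"
  assumes single_elim: "single_elim_tournament V E"
begin

lemma finite_V: "finite V"
  and edges_subset: "E \<subseteq> V \<times> V"
  and no_cycle: "(v, v) \<notin> E\<^sup>+"
  and in_degree_ne_1: "v \<in> V \<Longrightarrow> card (in_nbrs E v) \<noteq> 1"
  and one_sink: "card (sinks V E) = 1"
  and out_degree_eq_1: "v \<in> V - sinks V E \<Longrightarrow> card (out_nbrs E v) = 1"
  using single_elim unfolding single_elim_tournament_def by auto

lemma finite_E: "finite E"
  using finite_V edges_subset finite_subset by blast

lemma wf_E: "wf E"
  using finite_acyclic_wf[OF finite_E] no_cycle unfolding acyclic_def by blast

lemma wf_converse_E: "wf (E\<inverse>)"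
  using finite_acyclic_wf_converse[OF finite_E] no_cycle unfolding acyclic_def by blast

lemma out_edge_unique:
  assumes "(v, w1) \<in> E" "(v, w2) \<in> E"
  shows "w1 = w2"
proof -
  have "v \<in> V - sinks V E"
    using assms edges_subset unfolding sinks_def out_nbrs_def by auto
  then obtain z where "out_nbrs E v = {z}"
    using out_degree_eq_1 by (meson card_1_singletonE)
  moreover have "w1 \<in> out_nbrs E v" "w2 \<in> out_nbrs E v"
    using assms unfolding out_nbrs_def by auto
  ultimately show ?thesis
    by simp
qed

lemma rtrancl_common_source_comparable:
  assumes "(c, x) \<in> E\<^sup>*" "(c, u) \<in> E\<^sup>*"
  shows "(x, u) \<in> E\<^sup>* \<or> (u, x) \<in> E\<^sup>*"
  using assms
proof (induction arbitrary: u rule: converse_rtrancl_induct)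
  case base
  then show ?case by simp
next
  case (step c c')
  from step.prems show ?case
  proof (cases rule: converse_rtranclE)
    case base
    then show ?thesis
      using step.hyps by (meson converse_rtrancl_into_rtrancl)
  next
    case (step w)
    then have "w = c'"
      using out_edge_unique step.hyps(1) by blast
    then show ?thesis
      using step.IH step by blast
  qed
qed

lemma sink_reachable:
  obtains r where "\<And>v. v \<in> V \<Longrightarrow> (v, r) \<in> E\<^sup>*"
proof -
  obtain r where r: "sinks V E = {r}"
    using one_sink by (meson card_1_singletonE)
  have "(v, r) \<in> E\<^sup>*" if "v \<in> V" for v
    using that
  proof (induction v rule: wf_induct[OF wf_converse_E])
    case (1 v)
    show ?case
    proof (cases "v \<in> sinks V E")
      case True
      then show ?thesis using r by auto
    next
      case False
      then obtain w where w: "(v, w) \<in> E"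
        using 1 unfolding sinks_def out_nbrs_def by auto
      then have "(w, r) \<in> E\<^sup>*"
        using 1 edges_subset by auto
      then show ?thesis using w by auto
    qed
  qed
  then show ?thesis using that by blast
qed

lemma not_trancl_into_player: "a \<in> players V E \<Longrightarrow> (c, a) \<notin> E\<^sup>+"
  unfolding players_def in_nbrs_def by (auto dest: tranclD2)

lemma players_subset_V: "players V E \<subseteq> V"
  unfolding players_def by auto

lemma players_of_subset_players: "players_of V E v \<subseteq> players V E"
  unfolding players_of_def by auto

lemma finite_players: "finite (players V E)"
  using players_subset_V finite_V finite_subset by blast

lemma finite_players_of: "finite (players_of V E v)"
  using players_of_subset_players finite_players finite_subset by blast

lemma players_of_player: "a \<in> players V E \<Longrightarrow> players_of V E a = {a}"
  unfolding players_of_def using not_trancl_into_player by (auto simp: rtrancl_eq_or_trancl)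

lemma players_of_mono: "(u, v) \<in> E \<Longrightarrow> players_of V E u \<subseteq> players_of V E v"
  unfolding players_of_def by auto

lemma players_of_nonempty: "v \<in> V \<Longrightarrow> players_of V E v \<noteq> {}"
proof (induction v rule: wf_induct[OF wf_E])
  case (1 v)
  show ?case
  proof (cases "in_nbrs E v = {}")
    case True
    then have "v \<in> players V E"
      using 1 unfolding players_def by auto
    then show ?thesis using players_of_player by auto
  next
    case False
    then obtain u where u: "(u, v) \<in> E"
      unfolding in_nbrs_def by auto
    then have "players_of V E u \<noteq> {}"
      using 1 edges_subset by auto
    then show ?thesis using players_of_mono[OF u] by auto
  qed
qed

lemma players_of_match:
  assumes "x \<in> matches V E"
  shows "players_of V E x = (\<Union>u \<in> in_nbrs E x. players_of V E u)"
proof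
  show "players_of V E x \<subseteq> (\<Union>u \<in> in_nbrs E x. players_of V E u)"
  proof
    fix c assume c: "c \<in> players_of V E x"
    then have "c \<in> players V E" "(c, x) \<in> E\<^sup>+"
      using assms unfolding players_of_def matches_def by (auto simp: rtrancl_eq_or_trancl)
    moreover obtain u where "(c, u) \<in> E\<^sup>*" "(u, x) \<in> E"
      using tranclD2 \<open>(c, x) \<in> E\<^sup>+\<close> by metis
    ultimately show "c \<in> (\<Union>u \<in> in_nbrs E x. players_of V E u)"
      unfolding players_of_def in_nbrs_def by auto
  qed
  show "(\<Union>u \<in> in_nbrs E x. players_of V E u) \<subseteq> players_of V E x"
    using players_of_mono unfolding in_nbrs_def by auto
qed

lemma players_of_in_nbrs_disjoint:
  assumes "(u1, y) \<in> E" "(u2, y) \<in> E" "c \<in> players_of V E u1" "c \<in> players_of V E u2"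
  shows "u1 = u2"
proof (rule ccontr)
  assume "u1 \<noteq> u2"
  have no_path: False
    if path: "(u, u') \<in> E\<^sup>*" and edges: "(u, y) \<in> E" "(u', y) \<in> E" and "u \<noteq> u'" for u u'
  proof -
    have "(u, u') \<in> E\<^sup>+"
      using path \<open>u \<noteq> u'\<close> by (simp add: rtrancl_eq_or_trancl)
    then obtain w where "(u, w) \<in> E" "(w, u') \<in> E\<^sup>*"
      using tranclD by metis
    then have "(y, u') \<in> E\<^sup>*"
      using out_edge_unique edges(1) by blast
    then have "(y, y) \<in> E\<^sup>+"
      using edges(2) by (rule rtrancl_into_trancl1)
    then show False
      using no_cycle by blast
  qed
  have "(c, u1) \<in> E\<^sup>*" "(c, u2) \<in> E\<^sup>*"
    using assms unfolding players_of_def by auto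
  then have "(u1, u2) \<in> E\<^sup>* \<or> (u2, u1) \<in> E\<^sup>*"
    by (rule rtrancl_common_source_comparable)
  then show False
    using no_path assms(1,2) \<open>u1 \<noteq> u2\<close> by blast
qed

lemma exists_player_outside_child:
  assumes "(x, y) \<in> E"
  obtains c where "c \<in> players_of V E y" "c \<notin> players_of V E x"
proof -
  have "y \<in> V" "x \<in> in_nbrs E y"
    using assms edges_subset unfolding in_nbrs_def by auto
  then have "in_nbrs E y \<noteq> {x}"
    using in_degree_ne_1 by (metis is_singletonI is_singleton_altdef)
  then obtain w where w: "(w, y) \<in> E" "w \<noteq> x"
    using \<open>x \<in> in_nbrs E y\<close> unfolding in_nbrs_def by blast
  moreover have "w \<in> V"
    using w edges_subset by auto
  ultimately obtain c where c: "c \<in> players_of V E w"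
    using players_of_nonempty by blast
  have "c \<in> players_of V E y"
    using c players_of_mono[OF w(1)] by blast
  moreover have "c \<notin> players_of V E x"
    using c w assms players_of_in_nbrs_disjoint by blast
  ultimately show ?thesis
    by (rule that)
qed

definition meets_at :: "'v \<Rightarrow> 'v \<Rightarrow> 'v \<Rightarrow> bool" where
  "meets_at a b x \<longleftrightarrow> x \<in> matches V E \<and>
      (\<exists>ua ub. ua \<in> in_nbrs E x \<and> ub \<in> in_nbrs E x \<and>
         players_of V E ua \<inter> {a, b} = {a} \<and> players_of V E ub \<inter> {a, b} = {b})"

lemma meets_at_exists:
  assumes "a \<in> players V E" "b \<in> players V E" "a \<noteq> b"
  shows "\<exists>x. meets_at a b x"
proof -
  obtain r where r: "\<And>v. v \<in> V \<Longrightarrow> (v, r) \<in> E\<^sup>*"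
    using sink_reachable by blast
  define Z where "Z = {z. (a, z) \<in> E\<^sup>* \<and> (b, z) \<in> E\<^sup>*}"
  have "r \<in> Z"
    using r assms players_subset_V unfolding Z_def by auto
  then obtain x where x: "x \<in> Z" and x_min: "\<And>y. (y, x) \<in> E \<Longrightarrow> y \<notin> Z"
    using wfE_min[OF wf_E] by metis
  have "(a, x) \<in> E\<^sup>*" "(b, x) \<in> E\<^sup>*"
    using x unfolding Z_def by auto
  then have "(a, x) \<in> E\<^sup>+" "(b, x) \<in> E\<^sup>+"
    using assms not_trancl_into_player by (metis rtrancl_eq_or_trancl)+
  then obtain ua ub where ua: "(a, ua) \<in> E\<^sup>*" "(ua, x) \<in> E" and ub: "(b, ub) \<in> E\<^sup>*" "(ub, x) \<in> E"
    using tranclD2 by metis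
  have "ua \<notin> Z" "ub \<notin> Z"
    using x_min ua ub by auto
  then have "a \<in> players_of V E ua" "b \<notin> players_of V E ua"
    "b \<in> players_of V E ub" "a \<notin> players_of V E ub"
    using ua(1) ub(1) assms(1,2) unfolding Z_def players_of_def by simp_all
  then have "players_of V E ua \<inter> {a, b} = {a}" "players_of V E ub \<inter> {a, b} = {b}"
    by auto
  moreover have "x \<in> V" "in_nbrs E x \<noteq> {}"
    using ua edges_subset unfolding in_nbrs_def by auto
  then have "x \<in> matches V E"
    unfolding matches_def players_def by simp
  ultimately show ?thesis
    unfolding meets_at_def in_nbrs_def using ua ub by blast
qed

lemma meets_atE:
  assumes "meets_at a b x" "a \<noteq> b"
  obtains ua ub where "x \<in> matches V E" "(ua, x) \<in> E" "(ub, x) \<in> E"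
    "a \<in> players_of V E ua" "b \<notin> players_of V E ua"
    "b \<in> players_of V E ub" "a \<notin> players_of V E ub"
proof -
  obtain ua ub where "x \<in> matches V E" "(ua, x) \<in> E" "(ub, x) \<in> E"
    "players_of V E ua \<inter> {a, b} = {a}" "players_of V E ub \<inter> {a, b} = {b}"
    using assms(1) unfolding meets_at_def in_nbrs_def mem_Collect_eq by blast
  moreover from this(4,5) assms(2) have "a \<in> players_of V E ua" "b \<notin> players_of V E ua"
    "b \<in> players_of V E ub" "a \<notin> players_of V E ub"
    by (auto simp: set_eq_iff)
  ultimately show ?thesis
    using that by blast
qed

lemma meets_at_unique:
  assumes "meets_at a b x" "meets_at a b x'" "a \<noteq> b"
  shows "x = x'"
proof -
  have below: False
    if meet: "meets_at a b x" "meets_at a b x'" and path: "(x, x') \<in> E\<^sup>+" for x x'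
  proof -
    obtain ua ub where u: "(ua, x) \<in> E" "(ub, x) \<in> E" "a \<in> players_of V E ua" "b \<in> players_of V E ub"
      using meet(1) \<open>a \<noteq> b\<close> by (rule meets_atE)
    obtain ua' where u': "(ua', x') \<in> E" "a \<in> players_of V E ua'" "b \<notin> players_of V E ua'"
      using meet(2) \<open>a \<noteq> b\<close> by (rule meets_atE)
    obtain w where w: "(x, w) \<in> E\<^sup>*" "(w, x') \<in> E"
      using path tranclD2 by metis
    have "players_of V E x \<subseteq> players_of V E w"
      using w(1) unfolding players_of_def by auto
    then have "a \<in> players_of V E w" "b \<in> players_of V E w"
      using u players_of_mono by blast+
    then have "w = ua'"
      using players_of_in_nbrs_disjoint[OF w(2) u'(1)] u'(2) by blast
    then show False
      using \<open>b \<in> players_of V E w\<close> u'(3) by blast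
  qed
  obtain u where "(u, x) \<in> E" "a \<in> players_of V E u"
    using assms(1,3) by (rule meets_atE)
  obtain u' where "(u', x') \<in> E" "a \<in> players_of V E u'"
    using assms(2,3) by (rule meets_atE)
  have "(a, x) \<in> E\<^sup>*" "(a, x') \<in> E\<^sup>*"
    using players_of_mono \<open>(u, x) \<in> E\<close> \<open>a \<in> players_of V E u\<close>
      \<open>(u', x') \<in> E\<close> \<open>a \<in> players_of V E u'\<close> unfolding players_of_def by blast+
  then have "(x, x') \<in> E\<^sup>* \<or> (x', x) \<in> E\<^sup>*"
    by (rule rtrancl_common_source_comparable)
  then show ?thesis
    using below assms by (metis rtrancl_eq_or_trancl)
qed

lemma meets_at_meet_match:
  assumes "a \<in> players V E" "b \<in> players V E" "a \<noteq> b"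
  shows "meets_at a b (meet_match V E a b)"
proof -
  have "\<exists>!x. meets_at a b x"
    using meets_at_exists[OF assms] meets_at_unique assms(3) by blast
  then show ?thesis
    unfolding meet_match_def meets_at_def[symmetric] by (rule theI')
qed

lemma finite_brackets: "finite (brackets V E)"
proof (rule finite_subset)
  show "brackets V E \<subseteq> PiE V (\<lambda>_. players V E)"
  proof
    fix B assume "B \<in> brackets V E"
    then show "B \<in> PiE V (\<lambda>_. players V E)"
      unfolding brackets_def is_bracket_def by (simp add: PiE_iff)
  qed
  show "finite (PiE V (\<lambda>_. players V E))"
    using finite_V finite_players by (rule finite_PiE)
qed

definition rank_bracket :: "('v \<Rightarrow> nat) \<Rightarrow> 'v \<Rightarrow> 'v" where
  "rank_bracket rk = (\<lambda>v \<in> V. THE c. c \<in> players_of V E v \<and> (\<forall>d \<in> players_of V E v. rk c \<le> rk d))"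

lemma rank_bracket_eqI:
  assumes "inj_on rk (players V E)" "v \<in> V" "c \<in> players_of V E v"
    and "\<forall>d \<in> players_of V E v. rk c \<le> rk d"
  shows "rank_bracket rk v = c"
proof -
  have "(THE c. c \<in> players_of V E v \<and> (\<forall>d \<in> players_of V E v. rk c \<le> rk d)) = c"
  proof (rule the_equality)
    fix c' assume "c' \<in> players_of V E v \<and> (\<forall>d \<in> players_of V E v. rk c' \<le> rk d)"
    then show "c' = c"
      using assms players_of_subset_players by (metis inj_onD le_antisym subsetD)
  qed (use assms in auto)
  then show ?thesis
    using assms(2) unfolding rank_bracket_def by simp
qed

lemma exists_rank_minimal:
  fixes rk :: "'v \<Rightarrow> nat"
  assumes "v \<in> V"
  obtains c where "c \<in> players_of V E v" "\<forall>d \<in> players_of V E v. rk c \<le> rk d"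
proof -
  have "Min (rk ` players_of V E v) \<in> rk ` players_of V E v"
    using finite_players_of players_of_nonempty[OF assms] by simp
  then obtain c where "c \<in> players_of V E v" "rk c = Min (rk ` players_of V E v)"
    by auto
  then show ?thesis
    using that finite_players_of by simp
qed

lemma rank_bracket_is_bracket:
  assumes "inj_on rk (players V E)"
  shows "is_bracket V E (rank_bracket rk)"
  unfolding is_bracket_def
proof (intro conjI ballI)
  show "rank_bracket rk \<in> extensional V"
    unfolding rank_bracket_def by simp
next
  fix v assume "v \<in> V"
  then obtain c where "c \<in> players_of V E v" "\<forall>d \<in> players_of V E v. rk c \<le> rk d"
    using exists_rank_minimal by blast
  then show "rank_bracket rk v \<in> players V E"
    using rank_bracket_eqI[OF assms \<open>v \<in> V\<close>] players_of_subset_players by auto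
next
  fix a assume "a \<in> players V E"
  then show "rank_bracket rk a = a"
    using rank_bracket_eqI[OF assms] players_of_player players_subset_V by auto
next
  fix x assume x: "x \<in> matches V E"
  then have "x \<in> V"
    unfolding matches_def by auto
  then obtain c where c: "c \<in> players_of V E x" "\<forall>d \<in> players_of V E x. rk c \<le> rk d"
    using exists_rank_minimal by blast
  then obtain u where u: "u \<in> in_nbrs E x" "c \<in> players_of V E u"
    using players_of_match[OF x] by auto
  have "u \<in> V" "players_of V E u \<subseteq> players_of V E x"
    using u edges_subset players_of_match[OF x] unfolding in_nbrs_def by auto
  then have "rank_bracket rk u = c"
    using rank_bracket_eqI[OF assms _ u(2)] c by auto
  moreover have "rank_bracket rk x = c"
    using rank_bracket_eqI[OF assms \<open>x \<in> V\<close> c(1)] c by auto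
  ultimately show "rank_bracket rk x \<in> rank_bracket rk ` in_nbrs E x"
    using u by auto
qed

lemma bracket_upd_match:
  assumes B: "is_bracket V E B" and x: "x \<in> matches V E" and u: "u \<in> in_nbrs E x"
    and eliminated: "\<And>y. (x, y) \<in> E \<Longrightarrow> B y \<noteq> B x"
  shows "is_bracket V E (B(x := B u))"
  unfolding is_bracket_def
proof (intro conjI ballI)
  have "x \<in> V" "x \<notin> players V E" "u \<in> V" "u \<noteq> x"
    using x u edges_subset no_cycle unfolding matches_def in_nbrs_def by auto
  then show "B(x := B u) \<in> extensional V"
    using B unfolding is_bracket_def extensional_def by auto
  fix v assume "v \<in> V"
  then show "(B(x := B u)) v \<in> players V E"
    using B \<open>u \<in> V\<close> unfolding is_bracket_def by auto
next
  fix a assume "a \<in> players V E"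
  then show "(B(x := B u)) a = a"
    using B x unfolding is_bracket_def matches_def by auto
next
  fix z assume z: "z \<in> matches V E"
  show "(B(x := B u)) z \<in> B(x := B u) ` in_nbrs E z"
  proof (cases "z = x")
    case True
    have "u \<noteq> x"
      using u no_cycle unfolding in_nbrs_def by auto
    then show ?thesis
      using True u by force
  next
    case False
    obtain w where w: "w \<in> in_nbrs E z" "B z = B w"
      using B z unfolding is_bracket_def by force
    have "w \<noteq> x"
      using eliminated w unfolding in_nbrs_def by auto
    then show ?thesis
      using w False by force
  qed
qed

lemma exists_bracket_flippable_at_meet:
  assumes ab: "a \<in> players V E" "b \<in> players V E" "a \<noteq> b"
    and x_def: "x = meet_match V E a b"
  obtains B where "is_bracket V E B" "is_bracket V E (B(x := b))" "B x = a"
proof -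
  obtain ua ub where x: "x \<in> matches V E" and u: "(ua, x) \<in> E" "(ub, x) \<in> E"
    and ua: "a \<in> players_of V E ua" and ub: "b \<in> players_of V E ub" "a \<notin> players_of V E ub"
    using meets_at_meet_match[OF ab] ab(3) unfolding x_def by (rule meets_atE)
  have ub_x: "players_of V E ub \<subseteq> players_of V E x" and a_x: "a \<in> players_of V E x"
    using u ua players_of_mono by auto
  have "x \<in> V" "ub \<in> V"
    using x u(2) edges_subset unfolding matches_def by auto
  txt \<open>Ranked first: a player who beats a right after x (if x is not the final), else a itself.\<close>
  obtain c0 where c0: "c0 = a \<or> c0 \<notin> players_of V E x"
    and c0_next: "\<And>y. (x, y) \<in> E \<Longrightarrow> c0 \<in> players_of V E y \<and> c0 \<noteq> a"
  proof (cases "\<exists>y. (x, y) \<in> E")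
    case True
    then obtain y where y: "(x, y) \<in> E" by blast
    obtain c where c: "c \<in> players_of V E y" "c \<notin> players_of V E x"
      using exists_player_outside_child[OF y] by blast
    show ?thesis
    proof (rule that)
      show "c = a \<or> c \<notin> players_of V E x"
        using c by blast
      show "c \<in> players_of V E y' \<and> c \<noteq> a" if "(x, y') \<in> E" for y'
        using c a_x out_edge_unique[OF y that] by blast
    qed
  qed (use that in blast)
  obtain f :: "'v \<Rightarrow> nat" where f: "inj_on f (players V E)"
    using finite_imp_inj_to_nat_seg[OF finite_players] by metis
  define rk where
    "rk d = (if d = c0 then 0 else if d = a then 1 else if d = b then 2 else f d + 3)" for d
  have "inj_on rk (players V E)"
    using f unfolding inj_on_def rk_def by auto
  note rank = rank_bracket_is_bracket[OF this] rank_bracket_eqI[OF this]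
  define B where "B = rank_bracket rk"
  have "\<forall>d \<in> players_of V E x. rk a \<le> rk d"
    using c0 unfolding rk_def by auto
  then have "B x = a"
    unfolding B_def using rank(2)[OF \<open>x \<in> V\<close> a_x] by blast
  moreover have "\<forall>d \<in> players_of V E ub. rk b \<le> rk d"
    using c0 ub ub_x ab(3) unfolding rk_def by auto
  then have "B ub = b"
    unfolding B_def using rank(2)[OF \<open>ub \<in> V\<close> ub(1)] by blast
  moreover have "B y \<noteq> a" if "(x, y) \<in> E" for y
  proof -
    have "y \<in> V"
      using that edges_subset by auto
    moreover have "\<forall>d \<in> players_of V E y. rk c0 \<le> rk d"
      unfolding rk_def by simp
    ultimately have "B y = c0"
      unfolding B_def using rank(2) c0_next[OF that] by blast
    then show ?thesis
      using c0_next[OF that] by blast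
  qed
  ultimately have "is_bracket V E (B(x := B ub))"
    using bracket_upd_match[OF rank(1)[folded B_def] x] u(2) unfolding in_nbrs_def by auto
  then show ?thesis
    using that rank(1) \<open>B x = a\<close> \<open>B ub = b\<close> unfolding B_def by auto
qed

end

lemma score_upd_eq:
  assumes "C x \<noteq> B x" "C x \<noteq> c"
  shows "score V E \<sigma> C (B(x := c)) = score V E \<sigma> C B"
proof -
  have "{z \<in> matches V E. C z = (B(x := c)) z} = {z \<in> matches V E. C z = B z}"
    using assms by auto
  then show ?thesis
    unfolding score_def by simp
qed

lemma not_resolving_avoiding_upd:
  assumes "is_bracket V E B" "is_bracket V E (B(x := c))" "B x \<noteq> c"
  shows "\<not> resolving V E \<sigma> {C \<in> brackets V E. C x \<notin> {B x, c}}"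
proof
  assume "resolving V E \<sigma> {C \<in> brackets V E. C x \<notin> {B x, c}}"
  moreover have "B \<noteq> B(x := c)"
    using assms(3) by (metis fun_upd_same)
  ultimately obtain C where "C x \<notin> {B x, c}" "score V E \<sigma> C B \<noteq> score V E \<sigma> C (B(x := c))"
    using assms(1,2) unfolding resolving_def brackets_def by blast
  then show False
    using score_upd_eq by (metis insertCI)
qed

lemma resolving_mono: "resolving V E \<sigma> S \<Longrightarrow> S \<subseteq> T \<Longrightarrow> resolving V E \<sigma> T"
  unfolding resolving_def by blast

lemma card_lt_res_if_not_resolving:
  assumes "finite (brackets V E)" "S \<subseteq> brackets V E" "\<not> resolving V E \<sigma> S"
  shows "card S < res V E \<sigma>"
proof (rule ccontr)
  define all_resolving where
    "all_resolving r \<longleftrightarrow> (\<forall>S. S \<subseteq> brackets V E \<and> card S = r \<longrightarrow> resolving V E \<sigma> S)" for r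
  have "all_resolving (Suc (card (brackets V E)))"
    unfolding all_resolving_def
  proof (intro allI impI)
    fix T assume T: "T \<subseteq> brackets V E \<and> card T = Suc (card (brackets V E))"
    then have "card T \<le> card (brackets V E)"
      using card_mono[OF assms(1)] by blast
    then show "resolving V E \<sigma> T"
      using T by simp
  qed
  then have res: "all_resolving (res V E \<sigma>)"
    unfolding res_def all_resolving_def[symmetric] by (rule LeastI)
  assume "\<not> card S < res V E \<sigma>"
  then obtain T where T: "T \<subseteq> S" "card T = res V E \<sigma>"
    using obtain_subset_with_card_n by (metis not_less)
  then have "resolving V E \<sigma> T"
    using res assms(2) unfolding all_resolving_def by blast
  then show False
    using resolving_mono T(1) assms(3) by blast
qed

lemma q_pair_attained:
  assumes "finite (players V E)" "2 \<le> card (players V E)"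
  obtains a b where "a \<in> players V E" "b \<in> players V E" "a \<noteq> b" "q_pair V E = pair_prob V E a b"
proof -
  define Q where "Q = {pair_prob V E a b | a b. a \<in> players V E \<and> b \<in> players V E \<and> a \<noteq> b}"
  have "Q \<subseteq> (\<lambda>(a, b). pair_prob V E a b) ` (players V E \<times> players V E)"
    unfolding Q_def by auto
  then have "finite Q"
    using assms(1) finite_subset by blast
  moreover have "Q \<noteq> {}"
    using assms unfolding Q_def using card_le_Suc0_iff_eq by fastforce
  ultimately have "Min Q \<in> Q"
    by (rule Min_in)
  then show ?thesis
    using that unfolding q_pair_def Q_def[symmetric] by (auto simp: Q_def)
qed

lemma card_not_at_meet_match:
  assumes "finite (brackets V E)" "brackets V E \<noteq> {}"
  shows "real (card {C \<in> brackets V E. C (meet_match V E a b) \<notin> {a, b}})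
    = (1 - pair_prob V E a b) * real (card (brackets V E))"
proof -
  let ?S0 = "{C \<in> brackets V E. C (meet_match V E a b) \<notin> {a, b}}"
  let ?S1 = "{C \<in> brackets V E. C (meet_match V E a b) \<in> {a, b}}"
  have "?S0 \<union> ?S1 = brackets V E" "?S0 \<inter> ?S1 = {}"
    by auto
  then have "card ?S0 + card ?S1 = card (brackets V E)"
    using assms(1) card_Un_disjoint[of ?S0 ?S1] by simp
  then have "real (card ?S0) + real (card ?S1) = real (card (brackets V E))"
    by (simp flip: of_nat_add)
  moreover have "real (card (brackets V E)) > 0"
    using assms by (simp add: card_gt_0_iff)
  then have "(1 - pair_prob V E a b) * real (card (brackets V E))
      = real (card (brackets V E)) - real (card ?S1)"
    unfolding pair_prob_def by (simp add: field_simps)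
  ultimately show ?thesis
    by linarith
qed

theorem proposition4p4:
  fixes V :: "'v set" and E :: "('v \<times> 'v) set" and \<sigma> :: "'v \<Rightarrow> real" and N :: nat
  assumes "single_elim_tournament V E"
    and "card (players V E) \<ge> 2"
    and "N = card (brackets V E)"
    and "scoring_system V E \<sigma>"
  shows "real (res V E \<sigma>) > (1 - q_pair V E) * real N"
proof -
  interpret se_tournament V E
    using assms(1) by (rule se_tournament.intro)
  obtain a b where ab: "a \<in> players V E" "b \<in> players V E" "a \<noteq> b"
    and q: "q_pair V E = pair_prob V E a b"
    using q_pair_attained finite_players assms(2) by blast
  define x where "x = meet_match V E a b"
  obtain B where B: "is_bracket V E B" "is_bracket V E (B(x := b))" "B x = a"
    using exists_bracket_flippable_at_meet[OF ab x_def] by blast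
  define S where "S = {C \<in> brackets V E. C x \<notin> {a, b}}"
  have "card S < res V E \<sigma>"
    using card_lt_res_if_not_resolving[OF finite_brackets] not_resolving_avoiding_upd[OF B(1,2)]
      B(3) ab(3) unfolding S_def by auto
  moreover have "real (card S) = (1 - q_pair V E) * real N"
    using card_not_at_meet_match[OF finite_brackets] B(1) q assms(3)
    unfolding S_def x_def brackets_def by auto
  ultimately show ?thesis
    by simp
qed

end
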